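(* Let $R$ be a function from a recursive subset of $\mathbb{N}^2$ to $\mathbb{N}$ such that $R(n,w)\in B^n$ whenever $R(n,w)$ is defined. Then there exists a coloring function $c:\mathbb{N}\rightarrow\{0,1\}$, uniformly recursive in $R$, such that for every $w\in\mathbb{Z}^+$ and every $n<\lambda(w)$, if $R(n,w)$ is defined then $c(w)\neq c(R(n,w)+w)$.
   Context: For $x=\sum_{i=0}^{k}2^{n_i}\in\mathbb{Z}^+$ with $n_0<\cdots<n_k$, set $\mu(x)=n_k$ and $\lambda(x)=n_0$. For each $n$, $B^n=\{x\in\mathbb{Z}^+:\mu(x)=n\}$. *)

theory Defs
  imports Main "HOL-Library.Nat_Bijection"
begin

definition mu :: "nat \<Rightarrow> nat" where
  "mu x = Max {i. bit x i}"

definition lam :: "nat \<Rightarrow> nat" where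
  "lam x = Min {i. bit x i}"

definition B :: "nat \<Rightarrow> nat set" where
  "B n = {x. 0 < x \<and> mu x = n}"

datatype recf = Zero | Succ | Proj nat | Comp recf "recf list" | Prim recf recf | Mn recf | Orc

inductive eval :: "(nat \<Rightarrow> nat) \<Rightarrow> recf \<Rightarrow> nat list \<Rightarrow> nat \<Rightarrow> bool" for Q where
  eval_Zero: "eval Q Zero xs 0"
| eval_Succ: "eval Q Succ (x # xs) (Suc x)"
| eval_Proj: "i < length xs \<Longrightarrow> eval Q (Proj i) xs (xs ! i)"
| eval_Comp: "length ys = length gs \<Longrightarrow> (\<forall>i<length gs. eval Q (gs ! i) xs (ys ! i))
     \<Longrightarrow> eval Q f ys z \<Longrightarrow> eval Q (Comp f gs) xs z"
| eval_Prim0: "eval Q f xs z \<Longrightarrow> eval Q (Prim f g) (0 # xs) z"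
| eval_PrimS: "eval Q (Prim f g) (n # xs) y \<Longrightarrow> eval Q g (n # y # xs) z
     \<Longrightarrow> eval Q (Prim f g) (Suc n # xs) z"
| eval_Mn: "eval Q f (n # xs) 0 \<Longrightarrow> (\<forall>m<n. \<exists>y. eval Q f (m # xs) (Suc y))
     \<Longrightarrow> eval Q (Mn f) xs n"
| eval_Orc: "eval Q Orc (x # xs) (Q x)"

text \<open>A subset of N^2 is recursive: its characteristic function is computed by
  a term relative to the constant-zero orc_of (which is itself computable).\<close>

definition recursive_set2 :: "(nat \<times> nat) set \<Rightarrow> bool" where
  "recursive_set2 S \<longleftrightarrow> (\<exists>e. \<forall>n w. eval (\<lambda>_. 0) e [n, w] (if (n, w) \<in> S then 1 else 0))"

definition orc_of :: "(nat \<Rightarrow> nat \<Rightarrow> nat option) \<Rightarrow> nat \<Rightarrow> nat" where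
  "orc_of R x = (case prod_decode x of (n, w) \<Rightarrow>
      (case R n w of None \<Rightarrow> 0 | Some v \<Rightarrow> Suc v))"

end

theory Submission
  imports Defs
begin

(* The edges w -- w + R(n, w), n < lam w, are handled one bit position at a time.
   Stage L + 1 treats the w with lam w = L + 1.  All partners of such a w lie in
   w + [1, 2^(L+1)), the union of the dyadic intervals w + [2^t, 2^(t+1)), t <= L,
   and every edge of an earlier stage lies inside one of these intervals, while w itself
   is an endpoint of no earlier edge.  So stage L + 1 may color w with 0 and flip the
   whole interval w + [2^t, 2^(t+1)) so that w + R(t, w) gets color 1, without spoiling
   earlier edges.  A point y is never touched after stage mu y, so its final color is
   its color after stage y.  Each stage asks the oracle about finitely many points
   only, so the colors of all y < 2^K after L stages, packed into the binary digits
   of one number, are obtained by primitive recursion on L relative to the oracle. *)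

section \<open>Binary expansions\<close>

lemma exp_le_if_bit_nat: "bit (v::nat) i \<Longrightarrow> 2 ^ i \<le> v"
  by (metis bit_take_bit_iff less_irrefl not_le take_bit_nat_eq_self)

lemma finite_bits_nat: "finite {i. bit (v::nat) i}"
proof (rule finite_subset)
  show "{i. bit v i} \<subseteq> {..<v}"
    by (auto dest!: exp_le_if_bit_nat intro: less_le_trans[OF less_exp])
qed simp

lemma mu_bounds:
  assumes "0 < (v::nat)"
  shows "2 ^ mu v \<le> v" and "v < 2 ^ Suc (mu v)"
proof -
  have "{i. bit v i} \<noteq> {}"
    using assms bit_eqI[of v 0] by auto
  then have "bit v (mu v)"
    unfolding mu_def using Max_in[OF finite_bits_nat] by simp
  then show "2 ^ mu v \<le> v" by (rule exp_le_if_bit_nat)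
  have "take_bit (Suc (mu v)) v = v"
    by (rule bit_eqI) (auto simp: bit_take_bit_iff mu_def intro: Max_ge[OF finite_bits_nat] le_imp_less_Suc)
  then show "v < 2 ^ Suc (mu v)"
    by (metis take_bit_nat_less_exp)
qed

lemma mu_eqI:
  assumes "2 ^ i \<le> x" and "x < 2 ^ Suc i"
  shows "mu x = i"
proof -
  have "0 < x" using less_le_trans[OF _ assms(1)] by simp
  then have "2 ^ mu x < (2::nat) ^ Suc i" and "2 ^ i < (2::nat) ^ Suc (mu x)"
    using mu_bounds[OF \<open>0 < x\<close>] assms by linarith+
  then have "mu x < Suc i" and "i < Suc (mu x)"
    by (auto intro: power_less_imp_less_exp[of 2])
  then show ?thesis by simp
qed

lemma mu_le_if_less_exp: "0 < x \<Longrightarrow> x < 2 ^ Suc L \<Longrightarrow> mu x \<le> L"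
  using mu_bounds(1)[of x] power_less_imp_less_exp[of "2::nat" "mu x" "Suc L"] by simp

lemma mu_eq_Least: "0 < x \<Longrightarrow> mu x = (LEAST i. x div 2 ^ Suc i = 0)"
proof (rule sym, rule Least_equality)
  assume "0 < x"
  then show "x div 2 ^ Suc (mu x) = 0" using mu_bounds(2) by simp
  fix i assume "x div 2 ^ Suc i = 0"
  then have "2 ^ mu x < (2::nat) ^ Suc i"
    using mu_bounds(1)[OF \<open>0 < x\<close>] by (simp add: div_eq_0_iff)
  then show "mu x \<le> i" using power_less_imp_less_exp[of "2::nat" "mu x" "Suc i"] by simp
qed

lemma exp_dvd_if_less_lam:
  assumes "0 < (w::nat)" and "n < lam w"
  shows "2 ^ Suc n dvd w"
proof -
  have "\<not> bit w i" if "i \<le> n" for i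
    using Min_le[OF finite_bits_nat, of i w] assms(2) that unfolding lam_def by auto
  then have "take_bit (Suc n) w = 0"
    by (intro bit_eqI) (auto simp: bit_take_bit_iff)
  then show ?thesis by (simp add: take_bit_eq_0_iff)
qed

lemma div_mod_add_small:
  assumes "(m::nat) dvd d" and "m dvd y" and "v < m"
  shows "(y + v) div d = y div d" and "(y + v) mod d = y mod d + v"
proof -
  have "y mod d + v < d" if "0 < d"
  proof -
    obtain a where a: "y mod d = m * a" using assms(1,2) by (metis dvd_mod dvdE)
    obtain b where b: "d = m * b" using assms(1) by blast
    have "a < b" using a b that mod_less_divisor[OF that, of y] by simp
    then have "m * a + m \<le> m * b" using mult_le_mono2[of "Suc a" b m] by simp
    then show ?thesis using a b assms(3) by linarith
  qed
  then show "(y + v) div d = y div d" and "(y + v) mod d = y mod d + v"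
    by (cases "d = 0"; simp add: div_add1_eq[of y v] mod_add_left_eq[of y d v, symmetric])+
qed

lemma mu_add_small:
  assumes "2 ^ Suc n dvd x" and "0 < x" and "v < 2 ^ Suc n"
  shows "mu (x + v) = mu x"
proof (rule mu_eqI)
  have "2 ^ Suc n \<le> x" using assms(1,2) by (rule dvd_imp_le)
  then have "(2::nat) ^ Suc n < 2 ^ Suc (mu x)" using mu_bounds(2)[OF assms(2)] by linarith
  then have "Suc n \<le> Suc (mu x)"
    using power_less_imp_less_exp[of 2 "Suc n" "Suc (mu x)"] by simp
  then have "2 ^ Suc n dvd (2::nat) ^ Suc (mu x)" by (rule le_imp_power_dvd)
  then have "(x + v) div 2 ^ Suc (mu x) = x div 2 ^ Suc (mu x)"
    using div_mod_add_small(1)[OF _ assms(1,3)] by blast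
  then show "x + v < 2 ^ Suc (mu x)"
    using mu_bounds(2)[OF assms(2)] by (simp add: div_eq_0_iff)
  show "2 ^ mu x \<le> x + v" using mu_bounds(1)[OF assms(2)] by simp
qed

section \<open>The coloring\<close>

(* Stage L + 1, with y = p + x and x = y mod 2^(L+1): if bit L + 1 of y is set, then
   lam p = L + 1.  Q is the oracle: Q (prod_encode (n, p)) is 0 if R(n, p) is undefined
   and R(n, p) + 1 otherwise. *)
definition coloring_step :: "(nat \<Rightarrow> nat) \<Rightarrow> nat \<Rightarrow> (nat \<Rightarrow> nat) \<Rightarrow> nat \<Rightarrow> nat" where
  "coloring_step Q L G y =
     (let x = y mod 2 ^ Suc L; p = y - x in
      if \<not> bit y (Suc L) then G y
      else if x = 0 then 0
      else case Q (prod_encode (mu x, p)) of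
        0 \<Rightarrow> G y
      | Suc r \<Rightarrow> if G y = G (p + r) then 1 else 0)"

fun level_coloring :: "(nat \<Rightarrow> nat) \<Rightarrow> nat \<Rightarrow> nat \<Rightarrow> nat" where
  "level_coloring Q 0 = (\<lambda>_. 0)"
| "level_coloring Q (Suc L) = coloring_step Q L (level_coloring Q L)"

definition coloring :: "(nat \<Rightarrow> nat) \<Rightarrow> nat \<Rightarrow> nat" where
  "coloring Q y = level_coloring Q y y"

lemma coloring_step_le_1: "(\<And>z. G z \<le> 1) \<Longrightarrow> coloring_step Q L G y \<le> 1"
  by (auto simp: coloring_step_def Let_def split: nat.split)

lemma level_coloring_le_1: "level_coloring Q L y \<le> 1"
proof (induction L arbitrary: y)
  case (Suc L)
  show ?case unfolding level_coloring.simps by (rule coloring_step_le_1) (rule Suc.IH)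
qed simp

lemma coloring_step_below: "y < 2 ^ Suc L \<Longrightarrow> coloring_step Q L G y = G y"
  by (simp add: coloring_step_def bit_iff_odd)

lemma level_coloring_eq_coloring:
  assumes "y \<le> L"
  shows "level_coloring Q L y = coloring Q y"
  using assms
proof (induction rule: dec_induct)
  case (step n)
  have "y < 2 ^ Suc n"
    using less_exp[of y] power_increasing[of y "Suc n" "2::nat"] step.hyps(1) by linarith
  then show ?case using step.IH by (simp add: coloring_step_below)
qed (simp add: coloring_def)

lemma coloring_step_preserves_neq:
  assumes "\<And>z. G z \<le> 1" and "G y \<noteq> G y'"
    and "bit y (Suc L) = bit y' (Suc L)"
    and "y mod 2 ^ Suc L \<noteq> 0" and "y' mod 2 ^ Suc L \<noteq> 0"
    and "y - y mod 2 ^ Suc L = y' - y' mod 2 ^ Suc L"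
    and "mu (y mod 2 ^ Suc L) = mu (y' mod 2 ^ Suc L)"
  shows "coloring_step Q L G y \<noteq> coloring_step Q L G y'"
proof -
  have "(if G y = G c then 1 else 0) \<noteq> (if G y' = G c then 1 else (0::nat))" for c
    using assms(1)[of y] assms(1)[of y'] assms(1)[of c] assms(2) by auto
  then show ?thesis
    using assms(2-) by (auto simp: coloring_step_def Let_def split: nat.split)
qed

lemma coloring_step_new_edge:
  assumes "bit p (Suc L)" and "p mod 2 ^ Suc L = 0"
    and "0 < v" and "v < 2 ^ Suc L" and "Q (prod_encode (mu v, p)) = Suc v"
  shows "coloring_step Q L G p = 0" and "coloring_step Q L G (p + v) = 1"
proof -
  have "(p + v) div 2 ^ Suc L = p div 2 ^ Suc L" and "(p + v) mod 2 ^ Suc L = v"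
    using div_mod_add_small[of "2 ^ Suc L" "2 ^ Suc L" p v] assms(2,4) by (simp_all add: dvd_eq_mod_eq_0)
  then show "coloring_step Q L G p = 0" and "coloring_step Q L G (p + v) = 1"
    using assms by (simp_all add: coloring_step_def bit_iff_odd)
qed

(* Stage lam p creates the edge; each later stage leaves both p and p + v alone or flips
   an interval containing both. *)
lemma level_coloring_separates:
  assumes v: "2 ^ n \<le> v" "v < 2 ^ Suc n" and p: "2 ^ Suc n dvd p"
    and Q: "Q (prod_encode (n, p)) = Suc v"
  shows "p mod 2 ^ Suc L \<noteq> 0 \<Longrightarrow> level_coloring Q L p \<noteq> level_coloring Q L (p + v)"
proof (induction L)
  case 0
  then show ?case using p dvd_trans[of 2 "2 ^ Suc n" p] by (simp add: dvd_eq_mod_eq_0)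
next
  case (Suc L)
  define d :: nat where "d = 2 ^ Suc L"
  have "n \<le> L"
  proof (rule ccontr)
    assume "\<not> n \<le> L"
    then have "2 ^ Suc (Suc L) dvd p"
      using dvd_trans[OF le_imp_power_dvd[of "Suc (Suc L)" "Suc n" 2] p] by simp
    with Suc.prems show False by (simp add: dvd_eq_mod_eq_0)
  qed
  then have "2 ^ Suc n dvd d" by (simp add: d_def le_imp_power_dvd)
  then have div: "(p + v) div d = p div d" and mod: "(p + v) mod d = p mod d + v"
    using div_mod_add_small p v(2) by simp_all
  have bit_eq: "bit (p + v) (Suc L) = bit p (Suc L)"
    using div by (simp add: bit_iff_odd d_def)
  show ?case
  proof (cases "bit p (Suc L) \<and> p mod d = 0")
    case True
    have "(2::nat) ^ Suc n \<le> d"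
      unfolding d_def by (rule power_increasing) (use \<open>n \<le> L\<close> in simp_all)
    then have "v < d" using v(2) by linarith
    moreover have "0 < v" using less_le_trans[OF _ v(1)] by simp
    moreover have "Q (prod_encode (mu v, p)) = Suc v" using Q mu_eqI[OF v] by simp
    ultimately show ?thesis
      using coloring_step_new_edge[of p L v Q] True by (simp add: d_def)
  next
    case False
    have "p mod 2 ^ Suc (Suc L) = d * (p div d mod 2) + p mod d"
      unfolding d_def by (metis mod_mult2_eq power_Suc2)
    then have "p mod d \<noteq> 0"
      using False Suc.prems by (auto simp: bit_iff_odd d_def odd_iff_mod_2_eq_one)
    have "2 ^ Suc n dvd p mod d" using \<open>2 ^ Suc n dvd d\<close> p by (simp add: dvd_mod)
    then have "mu ((p + v) mod d) = mu (p mod d)"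
      using mod mu_add_small \<open>p mod d \<noteq> 0\<close> v(2) by simp
    moreover have "p + v - (p + v) mod d = p - p mod d" using mod by simp
    moreover have "level_coloring Q L p \<noteq> level_coloring Q L (p + v)"
      using Suc.IH \<open>p mod d \<noteq> 0\<close> d_def by simp
    ultimately show ?thesis
      using coloring_step_preserves_neq[OF level_coloring_le_1] bit_eq mod \<open>p mod d \<noteq> 0\<close>
      by (simp add: d_def)
  qed
qed

lemma coloring_separates:
  assumes "2 ^ n \<le> v" and "v < 2 ^ Suc n" and "2 ^ Suc n dvd w" and "0 < w"
    and "Q (prod_encode (n, w)) = Suc v"
  shows "coloring Q w \<noteq> coloring Q (v + w)"
proof -
  have "w < 2 ^ Suc (w + v)"
    by (rule less_le_trans[OF less_exp power_increasing]) simp_all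
  with \<open>0 < w\<close> have "w mod 2 ^ Suc (w + v) \<noteq> 0" by simp
  with assms have "level_coloring Q (w + v) w \<noteq> level_coloring Q (w + v) (w + v)"
    by (intro level_coloring_separates)
  then show ?thesis by (simp add: level_coloring_eq_coloring add.commute)
qed

section \<open>Recursive terms\<close>

definition computes :: "(nat \<Rightarrow> nat) \<Rightarrow> nat \<Rightarrow> recf \<Rightarrow> (nat list \<Rightarrow> nat) \<Rightarrow> bool" where
  "computes Q k f F \<longleftrightarrow> (\<forall>xs. k \<le> length xs \<longrightarrow> eval Q f xs (F xs))"

lemma computes_cong:
  "computes Q k f F \<Longrightarrow> (\<And>xs. k \<le> length xs \<Longrightarrow> F xs = F' xs) \<Longrightarrow> computes Q k f F'"
  unfolding computes_def by auto

lemma computes_Zero: "computes Q k Zero (\<lambda>_. 0)"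
  unfolding computes_def by (auto intro: eval_Zero)

lemma computes_Succ: "computes Q 1 Succ (\<lambda>xs. Suc (xs ! 0))"
  unfolding computes_def by (metis eval_Succ One_nat_def Suc_le_length_iff nth_Cons_0)

lemma computes_Orc: "computes Q 1 Orc (\<lambda>xs. Q (xs ! 0))"
  unfolding computes_def by (metis eval_Orc One_nat_def Suc_le_length_iff nth_Cons_0)

lemma computes_Proj: "i < k \<Longrightarrow> computes Q k (Proj i) (\<lambda>xs. xs ! i)"
  unfolding computes_def by (auto intro: eval_Proj)

lemma computes_Comp:
  assumes "computes Q n f F" and "length gs = n" and "list_all2 (computes Q k) gs Gs"
  shows "computes Q k (Comp f gs) (\<lambda>xs. F (map (\<lambda>G. G xs) Gs))"
  unfolding computes_def
proof (intro allI impI)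
  fix xs :: "nat list"
  assume "k \<le> length xs"
  moreover have "length Gs = n" using assms(2,3) by (simp add: list_all2_lengthD)
  ultimately show "eval Q (Comp f gs) xs (F (map (\<lambda>G. G xs) Gs))"
    using assms by (intro eval_Comp[where ys = "map (\<lambda>G. G xs) Gs"])
      (auto simp: computes_def list_all2_conv_all_nth)
qed

lemma computes_PrimI:
  assumes "0 < k" and f: "computes Q (k - 1) f F" and g: "computes Q (Suc k) g G"
    and H0: "\<And>ys. k - 1 \<le> length ys \<Longrightarrow> H 0 ys = F ys"
    and HSuc: "\<And>n ys. k - 1 \<le> length ys \<Longrightarrow> H (Suc n) ys = G (n # H n ys # ys)"
    and R: "\<And>n ys. k - 1 \<le> length ys \<Longrightarrow> R (n # ys) = H n ys"
  shows "computes Q k (Prim f g) R"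
  unfolding computes_def
proof (intro allI impI)
  fix xs :: "nat list"
  assume "k \<le> length xs"
  then obtain n ys where xs: "xs = n # ys" and ys: "k - 1 \<le> length ys"
    using \<open>0 < k\<close> by (cases xs) auto
  have "eval Q (Prim f g) (m # ys) (H m ys)" for m
  proof (induction m)
    case 0
    then show ?case using f ys H0 by (simp add: computes_def eval_Prim0)
  next
    case (Suc m)
    then show ?case using g ys HSuc by (simp add: computes_def eval_PrimS)
  qed
  then show "eval Q (Prim f g) xs (R xs)" using xs R ys by simp
qed

lemma computes_MnI:
  assumes f: "computes Q (Suc k) f F"
    and ex: "\<And>xs. k \<le> length xs \<Longrightarrow> \<exists>n. F (n # xs) = 0"
    and R: "\<And>xs. k \<le> length xs \<Longrightarrow> R xs = (LEAST n. F (n # xs) = 0)"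
  shows "computes Q k (Mn f) R"
  unfolding computes_def
proof (intro allI impI)
  fix xs :: "nat list"
  assume xs: "k \<le> length xs"
  define n where "n = (LEAST n. F (n # xs) = 0)"
  have F_n: "F (n # xs) = 0" unfolding n_def using ex[OF xs] by (rule LeastI_ex)
  have F_less: "F (m # xs) \<noteq> 0" if "m < n" for m
    using that unfolding n_def by (rule not_less_Least)
  have eval_f: "eval Q f (m # xs) (F (m # xs))" for m
    using f xs by (simp add: computes_def)
  have "eval Q (Mn f) xs n"
  proof (rule eval_Mn)
    show "eval Q f (n # xs) 0" using eval_f[of n] F_n by simp
    show "\<forall>m<n. \<exists>y. eval Q f (m # xs) (Suc y)"
    proof (intro allI impI)
      fix m
      assume "m < n"
      then have "F (m # xs) = Suc (F (m # xs) - 1)" using F_less by simp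
      then show "\<exists>y. eval Q f (m # xs) (Suc y)" using eval_f[of m] by metis
    qed
  qed
  then show "eval Q (Mn f) xs (R xs)" using R[OF xs] n_def by simp
qed

fun rf_const :: "nat \<Rightarrow> recf" where
  "rf_const 0 = Zero"
| "rf_const (Suc c) = Comp Succ [rf_const c]"

lemma computes_rf_const: "computes Q k (rf_const c) (\<lambda>_. c)"
proof (induction c)
  case (Suc c)
  show ?case
    unfolding rf_const.simps
    by (rule computes_cong, (rule computes_Comp computes_Succ list.rel_intros Suc.IH | simp)+)
qed (simp add: computes_Zero)

lemmas computes_intros =
  computes_Zero computes_Succ computes_Orc computes_Proj computes_Comp computes_rf_const
  list.rel_intros

definition rf_add :: recf where
  "rf_add = Prim (Proj 0) (Comp Succ [Proj 1])"

lemma computes_rf_add: "computes Q 2 rf_add (\<lambda>xs. xs ! 0 + xs ! 1)"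
  unfolding rf_add_def
  by (rule computes_PrimI[where H = "\<lambda>n ys. n + ys ! 0"]) (rule computes_intros | simp)+

definition rf_mult :: recf where
  "rf_mult = Prim Zero (Comp rf_add [Proj 1, Proj 2])"

lemma computes_rf_mult: "computes Q 2 rf_mult (\<lambda>xs. xs ! 0 * xs ! 1)"
  unfolding rf_mult_def
  by (rule computes_PrimI[where H = "\<lambda>n ys. n * ys ! 0"]) (rule computes_intros computes_rf_add | simp)+

definition rf_pred :: recf where
  "rf_pred = Prim Zero (Proj 0)"

lemma computes_rf_pred: "computes Q 1 rf_pred (\<lambda>xs. xs ! 0 - 1)"
  unfolding rf_pred_def
  by (rule computes_PrimI[where H = "\<lambda>n ys. n - 1"]) (rule computes_intros | simp)+

definition rf_sub_swapped :: recf where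
  "rf_sub_swapped = Prim (Proj 0) (Comp rf_pred [Proj 1])"

lemma computes_rf_sub_swapped: "computes Q 2 rf_sub_swapped (\<lambda>xs. xs ! 1 - xs ! 0)"
  unfolding rf_sub_swapped_def
  by (rule computes_PrimI[where H = "\<lambda>n ys. ys ! 0 - n"]) (rule computes_intros computes_rf_pred | simp)+

definition rf_sub :: recf where
  "rf_sub = Comp rf_sub_swapped [Proj 1, Proj 0]"

lemma computes_rf_sub: "computes Q 2 rf_sub (\<lambda>xs. xs ! 0 - xs ! 1)"
  unfolding rf_sub_def
  by (rule computes_cong, (rule computes_intros computes_rf_sub_swapped | simp)+)

definition rf_if :: recf where
  "rf_if = Prim (Proj 0) (Proj 3)"

lemma computes_rf_if: "computes Q 3 rf_if (\<lambda>xs. if xs ! 0 = 0 then xs ! 1 else xs ! 2)"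
  unfolding rf_if_def
  by (rule computes_PrimI[where H = "\<lambda>n ys. if n = 0 then ys ! 0 else ys ! 1"])
    (rule computes_intros | simp add: numeral_2_eq_2)+

definition rf_pow2 :: recf where
  "rf_pow2 = Prim (rf_const 1) (Comp rf_add [Proj 1, Proj 1])"

lemma computes_rf_pow2: "computes Q 1 rf_pow2 (\<lambda>xs. 2 ^ xs ! 0)"
  unfolding rf_pow2_def
  by (rule computes_PrimI[where H = "\<lambda>n ys. 2 ^ n"]) (rule computes_intros computes_rf_add | simp)+

lemma Least_Suc_diff_mult_eq_div:
  assumes "0 < (d::nat)"
  shows "(LEAST q. Suc x - Suc q * d = 0) = x div d"
proof (rule Least_equality)
  show "Suc x - Suc (x div d) * d = 0"
    using assms by (simp add: Suc_le_eq dividend_less_div_times add.commute)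
  fix q
  assume "Suc x - Suc q * d = 0"
  then have "x < Suc q * d" by simp
  then show "x div d \<le> q" using less_mult_imp_div_less[of x "Suc q" d] by simp
qed

definition rf_div_pow2 :: recf where
  "rf_div_pow2 =
  Mn (Comp rf_sub [Comp Succ [Proj 1], Comp rf_mult [Comp Succ [Proj 0], Comp rf_pow2 [Proj 2]]])"

lemma computes_rf_div_pow2: "computes Q 2 rf_div_pow2 (\<lambda>xs. xs ! 0 div 2 ^ xs ! 1)"
  unfolding rf_div_pow2_def
proof (rule computes_MnI[where F = "\<lambda>ys. Suc (ys ! 1) - Suc (ys ! 0) * 2 ^ ys ! 2"])
  fix xs :: "nat list"
  show "\<exists>q. Suc ((q # xs) ! 1) - Suc ((q # xs) ! 0) * 2 ^ (q # xs) ! 2 = 0"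
    using mult_le_mono2[of 1 "2 ^ xs ! 1" "Suc (xs ! 0)"] by (intro exI[of _ "xs ! 0"]) simp
  show "xs ! 0 div 2 ^ xs ! 1 = (LEAST q. Suc ((q # xs) ! 1) - Suc ((q # xs) ! 0) * 2 ^ (q # xs) ! 2 = 0)"
    using Least_Suc_diff_mult_eq_div[of "2 ^ xs ! 1" "xs ! 0"] by simp
qed (rule computes_cong, (rule computes_intros computes_rf_sub computes_rf_mult computes_rf_pow2 | simp)+)

definition rf_bit :: recf where
  "rf_bit =
  Comp rf_sub [Comp rf_div_pow2 [Proj 0, Proj 1],
    Comp rf_add [Comp rf_div_pow2 [Proj 0, Comp Succ [Proj 1]], Comp rf_div_pow2 [Proj 0, Comp Succ [Proj 1]]]]"

lemma computes_rf_bit: "computes Q 2 rf_bit (\<lambda>xs. xs ! 0 div 2 ^ xs ! 1 mod 2)"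
proof (rule computes_cong)
  show "computes Q 2 rf_bit (\<lambda>xs. xs ! 0 div 2 ^ xs ! 1 - 2 * (xs ! 0 div 2 ^ Suc (xs ! 1)))"
    unfolding rf_bit_def
    by (rule computes_cong, (rule computes_intros computes_rf_sub computes_rf_add computes_rf_div_pow2 | simp)+)
  have "x div 2 ^ Suc i = x div 2 ^ i div 2" for x i :: nat
    by (metis div_mult2_eq power_Suc2)
  then show "xs ! 0 div 2 ^ xs ! 1 - 2 * (xs ! 0 div 2 ^ Suc (xs ! 1)) = xs ! 0 div 2 ^ xs ! 1 mod 2" for xs
    by (simp add: minus_mult_div_eq_mod)
qed

definition rf_mod_pow2 :: recf where
  "rf_mod_pow2 = Comp rf_sub [Proj 0, Comp rf_mult [Comp rf_pow2 [Proj 1], rf_div_pow2]]"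

lemma computes_rf_mod_pow2: "computes Q 2 rf_mod_pow2 (\<lambda>xs. xs ! 0 mod 2 ^ xs ! 1)"
  unfolding rf_mod_pow2_def
  by (rule computes_cong, (rule computes_intros computes_rf_sub computes_rf_mult computes_rf_pow2
        computes_rf_div_pow2 | simp)+)
    (simp add: minus_mult_div_eq_mod)

definition rf_mu :: recf where
  "rf_mu = Mn (Comp rf_div_pow2 [Proj 1, Comp Succ [Proj 0]])"

lemma computes_rf_mu: "computes Q 1 rf_mu (\<lambda>xs. LEAST i. xs ! 0 div 2 ^ Suc i = 0)"
  unfolding rf_mu_def
proof (rule computes_MnI[where F = "\<lambda>ys. ys ! 1 div 2 ^ Suc (ys ! 0)"])
  fix xs :: "nat list"
  show "\<exists>i. (i # xs) ! 1 div 2 ^ Suc ((i # xs) ! 0) = 0"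
    using less_exp[of "xs ! 0"] by (intro exI[of _ "xs ! 0"]) (simp add: div_eq_0_iff del: less_exp)
qed (rule computes_cong, (rule computes_intros computes_rf_div_pow2 | simp)+)

definition rf_triangle :: recf where
  "rf_triangle = Prim Zero (Comp rf_add [Proj 1, Comp Succ [Proj 0]])"

lemma computes_rf_triangle: "computes Q 1 rf_triangle (\<lambda>xs. triangle (xs ! 0))"
  unfolding rf_triangle_def
  by (rule computes_PrimI[where H = "\<lambda>n ys. triangle n"]) (rule computes_intros computes_rf_add | simp)+

definition rf_prod_encode :: recf where
  "rf_prod_encode = Comp rf_add [Comp rf_triangle [Comp rf_add [Proj 0, Proj 1]], Proj 0]"

lemma computes_rf_prod_encode: "computes Q 2 rf_prod_encode (\<lambda>xs. prod_encode (xs ! 0, xs ! 1))"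
  unfolding rf_prod_encode_def
  by (rule computes_cong, (rule computes_intros computes_rf_add computes_rf_triangle | simp)+)
    (simp add: prod_encode_def)

definition rf_eq :: recf where
  "rf_eq = Comp rf_sub [rf_const 1, Comp rf_add [rf_sub, Comp rf_sub [Proj 1, Proj 0]]]"

lemma computes_rf_eq: "computes Q 2 rf_eq (\<lambda>xs. if xs ! 0 = xs ! 1 then 1 else 0)"
  unfolding rf_eq_def
  by (rule computes_cong, (rule computes_intros computes_rf_sub computes_rf_add | simp)+)

section \<open>Computing the coloring\<close>

lemma coloring_step_arith:
  "coloring_step Q L G y =
    (let x = y mod 2 ^ Suc L; p = y - x; a = Q (prod_encode (LEAST i. x div 2 ^ Suc i = 0, p)) in
     if y div 2 ^ Suc L mod 2 = 0 then G y
     else if x = 0 then 0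
     else if a = 0 then G y
     else if G y = G (p + a - 1) then 1 else 0)"
  by (auto simp: coloring_step_def Let_def bit_iff_odd odd_iff_mod_2_eq_one mu_eq_Least split: nat.split)

definition rf_coloring_step :: recf where
  "rf_coloring_step =
  (let x = Comp rf_mod_pow2 [Proj 1, Comp Succ [Proj 0]];
       p = Comp rf_sub [Proj 1, x];
       answer = Comp Orc [Comp rf_prod_encode [Comp rf_mu [x], p]];
       color_y = Comp rf_bit [Proj 2, Proj 1];
       color_partner = Comp rf_bit [Proj 2, Comp rf_sub [Comp rf_add [p, answer], rf_const 1]]
   in Comp rf_if [Comp rf_bit [Proj 1, Comp Succ [Proj 0]], color_y,
        Comp rf_if [x, Zero, Comp rf_if [answer, color_y, Comp rf_eq [color_y, color_partner]]]])"

lemma computes_rf_coloring_step: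
  "computes Q 3 rf_coloring_step (\<lambda>xs. coloring_step Q (xs ! 0) (\<lambda>z. xs ! 2 div 2 ^ z mod 2) (xs ! 1))"
  unfolding rf_coloring_step_def Let_def
  by (rule computes_cong, ((rule computes_intros computes_rf_if computes_rf_bit computes_rf_mod_pow2
        computes_rf_sub computes_rf_add computes_rf_prod_encode computes_rf_mu computes_rf_eq | simp)+)[1])
    (simp add: coloring_step_arith Let_def)

(* The colors of 0, ..., N - 1 after L stages, as the binary digits of one number. *)
fun table :: "(nat \<Rightarrow> nat) \<Rightarrow> nat \<Rightarrow> nat \<Rightarrow> nat" where
  "table Q N 0 = 0"
| "table Q N (Suc L) = (\<Sum>y<N. coloring_step Q L (\<lambda>z. table Q N L div 2 ^ z mod 2) y * 2 ^ y)"

definition rf_table_row :: recf where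
  "rf_table_row =
  Prim Zero (Comp rf_add
    [Proj 1, Comp rf_mult [Comp rf_coloring_step [Proj 2, Proj 0, Proj 3], Comp rf_pow2 [Proj 0]]])"

lemma computes_rf_table_row:
  "computes Q 3 rf_table_row
    (\<lambda>xs. \<Sum>y<xs ! 0. coloring_step Q (xs ! 1) (\<lambda>z. xs ! 2 div 2 ^ z mod 2) y * 2 ^ y)"
  unfolding rf_table_row_def
  by (rule computes_PrimI[where
        H = "\<lambda>n ys. \<Sum>y<n. coloring_step Q (ys ! 0) (\<lambda>z. ys ! 1 div 2 ^ z mod 2) y * 2 ^ y"])
    (rule computes_intros computes_rf_add computes_rf_mult computes_rf_coloring_step computes_rf_pow2
      | simp add: numeral_2_eq_2)+

definition rf_table :: recf where
  "rf_table = Prim Zero (Comp rf_table_row [Proj 2, Proj 0, Proj 1])"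

lemma computes_rf_table: "computes Q 2 rf_table (\<lambda>xs. table Q (xs ! 1) (xs ! 0))"
  unfolding rf_table_def
  by (rule computes_PrimI[where H = "\<lambda>n ys. table Q (ys ! 0) n"])
    (rule computes_intros computes_rf_table_row | simp add: numeral_2_eq_2)+

definition rf_coloring :: recf where
  "rf_coloring = Comp rf_bit [Comp rf_table [Proj 0, Comp rf_pow2 [Comp Succ [Proj 0]]], Proj 0]"

lemma computes_rf_coloring:
  "computes Q 1 rf_coloring (\<lambda>xs. table Q (2 ^ Suc (xs ! 0)) (xs ! 0) div 2 ^ xs ! 0 mod 2)"
  unfolding rf_coloring_def
  by (rule computes_cong, (rule computes_intros computes_rf_bit computes_rf_table computes_rf_pow2 | simp)+)

lemma binary_sum_less: "(\<And>y. y < N \<Longrightarrow> b y \<le> 1) \<Longrightarrow> (\<Sum>y<N. b y * 2 ^ y) < (2::nat) ^ N"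
proof (induction N)
  case (Suc N)
  then have "(\<Sum>y<N. b y * 2 ^ y) < 2 ^ N" by simp
  moreover have "b N * 2 ^ N \<le> (2::nat) ^ N" using Suc.prems[of N] by simp
  ultimately show ?case unfolding sum.lessThan_Suc power_Suc by linarith
qed simp

lemma binary_sum_digit:
  fixes b :: "nat \<Rightarrow> nat"
  assumes "\<And>y. y < N \<Longrightarrow> b y \<le> 1" and "j < N"
  shows "(\<Sum>y<N. b y * 2 ^ y) div 2 ^ j mod 2 = b j"
  using assms
proof (induction N)
  case (Suc N)
  define S where "S = (\<Sum>y<N. b y * 2 ^ y)"
  have sum_Suc: "(\<Sum>y<Suc N. b y * 2 ^ y) = S + b N * 2 ^ N" by (simp add: S_def)
  show ?case
  proof (cases "j < N")
    case True
    have "(2::nat) ^ N = 2 * 2 ^ (N - Suc j) * 2 ^ j"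
      using True by (simp flip: power_add power_Suc)
    then have "S + b N * 2 ^ N = S + 2 * (b N * 2 ^ (N - Suc j)) * 2 ^ j"
      by (simp add: ac_simps)
    also have "\<dots> div 2 ^ j = 2 * (b N * 2 ^ (N - Suc j)) + S div 2 ^ j"
      by (rule div_mult_self1) simp
    finally have "(S + b N * 2 ^ N) div 2 ^ j mod 2 = S div 2 ^ j mod 2" by simp
    with Suc.IH Suc.prems(1) True show ?thesis unfolding sum_Suc S_def by simp
  next
    case False
    then have "j = N" using Suc.prems(2) by simp
    moreover have "S < 2 ^ N" unfolding S_def using Suc.prems(1) by (intro binary_sum_less) simp
    ultimately show ?thesis unfolding sum_Suc using Suc.prems(1)[of N] by simp
  qed
qed simp

lemma coloring_step_cong:
  assumes "G y = G' y"
    and "\<And>r. Q (prod_encode (mu (y mod 2 ^ Suc L), y - y mod 2 ^ Suc L)) = Suc r \<Longrightarrow>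
      bit y (Suc L) \<Longrightarrow> y mod 2 ^ Suc L \<noteq> 0 \<Longrightarrow>
      G (y - y mod 2 ^ Suc L + r) = G' (y - y mod 2 ^ Suc L + r)"
  shows "coloring_step Q L G y = coloring_step Q L G' y"
  using assms by (auto simp: coloring_step_def Let_def split: nat.split)

lemma table_digit:
  assumes bound: "\<And>n p r. Q (prod_encode (n, p)) = Suc r \<Longrightarrow> r < 2 ^ Suc n"
  shows "y < 2 ^ K \<Longrightarrow> table Q (2 ^ K) L div 2 ^ y mod 2 = level_coloring Q L y"
proof (induction L arbitrary: y)
  case (Suc L)
  let ?G = "\<lambda>z. table Q (2 ^ K) L div 2 ^ z mod 2"
  have "table Q (2 ^ K) (Suc L) div 2 ^ y mod 2 = coloring_step Q L ?G y"
    unfolding table.simps using Suc.prems by (intro binary_sum_digit coloring_step_le_1) simp_all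
  also have "\<dots> = coloring_step Q L (level_coloring Q L) y"
  proof (rule coloring_step_cong)
    show "?G y = level_coloring Q L y" using Suc by simp
    fix r
    define d :: nat where "d = 2 ^ Suc L"
    assume answer: "Q (prod_encode (mu (y mod 2 ^ Suc L), y - y mod 2 ^ Suc L)) = Suc r"
      and "bit y (Suc L)" and "y mod 2 ^ Suc L \<noteq> 0"
    then have "r < 2 ^ Suc (mu (y mod d))" using bound d_def by blast
    also have "\<dots> \<le> d"
      unfolding d_def using mu_le_if_less_exp[of "y mod d" L] \<open>y mod 2 ^ Suc L \<noteq> 0\<close>
      by (intro power_increasing) (simp_all add: d_def)
    finally have "r < d" .
    have "d < 2 ^ K"
      using exp_le_if_bit_nat[OF \<open>bit y (Suc L)\<close>] Suc.prems d_def by linarith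
    then have "Suc L \<le> K"
      unfolding d_def using power_less_imp_less_exp[of "2::nat" "Suc L" K] by simp
    then have "d dvd 2 ^ K" unfolding d_def by (rule le_imp_power_dvd)
    moreover have "d dvd y - y mod d" by (simp add: minus_mod_eq_mult_div)
    ultimately have "(y - y mod d + r) div 2 ^ K = (y - y mod d) div 2 ^ K"
      using div_mod_add_small(1) \<open>r < d\<close> by blast
    then have "y - y mod d + r < 2 ^ K" using Suc.prems by (simp add: div_eq_0_iff)
    then show "?G (y - y mod 2 ^ Suc L + r) = level_coloring Q L (y - y mod 2 ^ Suc L + r)"
      using Suc.IH d_def by simp
  qed
  also have "\<dots> = level_coloring Q (Suc L) y" by simp
  finally show ?case .
qed simp

lemma eval_rf_coloring:
  assumes "\<And>n p r. Q (prod_encode (n, p)) = Suc r \<Longrightarrow> r < 2 ^ Suc n"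
  shows "eval Q rf_coloring [w] (coloring Q w)"
proof -
  have "eval Q rf_coloring [w] (table Q (2 ^ Suc w) w div 2 ^ w mod 2)"
    using computes_rf_coloring[of Q, unfolded computes_def, rule_format, of "[w]"] by simp
  then show ?thesis
    using table_digit[OF assms, where y = w and K = "Suc w" and L = w] less_exp[of w]
    by (simp add: coloring_def)
qed

lemma rf_coloring_correct:
  assumes "\<And>n w v. R n w = Some v \<Longrightarrow> v \<in> B n"
  shows "eval (orc_of R) rf_coloring [w] (coloring (orc_of R) w)"
    and "coloring (orc_of R) w \<in> {0, 1}"
    and "0 < w \<Longrightarrow> n < lam w \<Longrightarrow> R n w = Some v \<Longrightarrow>
      coloring (orc_of R) w \<noteq> coloring (orc_of R) (v + w)"
proof -
  have R_bounds: "2 ^ n \<le> v \<and> v < 2 ^ Suc n" if "R n w = Some v" for n w v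
    using assms[OF that] mu_bounds[of v] by (auto simp: B_def)
  have orc_R: "orc_of R (prod_encode (n, w)) = Suc v \<longleftrightarrow> R n w = Some v" for n w v
    by (simp add: orc_of_def split: option.split)
  show "eval (orc_of R) rf_coloring [w] (coloring (orc_of R) w)"
    using R_bounds orc_R by (intro eval_rf_coloring) blast
  show "coloring (orc_of R) w \<in> {0, 1}"
    using level_coloring_le_1[of "orc_of R" w w] by (auto simp: coloring_def)
  assume "0 < w" and "n < lam w" and "R n w = Some v"
  then show "coloring (orc_of R) w \<noteq> coloring (orc_of R) (v + w)"
    using R_bounds exp_dvd_if_less_lam orc_R by (intro coloring_separates) simp_all
qed

(* The oracle orc_of R already tells whether R(n, w) is defined. *)
theorem lemma2p3:
  shows "\<exists>e::recf. \<forall>R::nat \<Rightarrow> nat \<Rightarrow> nat option.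
     recursive_set2 {(n, w). R n w \<noteq> None} \<and> (\<forall>n w v. R n w = Some v \<longrightarrow> v \<in> B n) \<longrightarrow>
     (\<exists>c::nat \<Rightarrow> nat. (\<forall>w. eval (orc_of R) e [w] (c w)) \<and> (\<forall>w. c w \<in> {0, 1}) \<and>
        (\<forall>w n v. 0 < w \<longrightarrow> n < lam w \<longrightarrow> R n w = Some v \<longrightarrow> c w \<noteq> c (v + w)))"
  using rf_coloring_correct by blast

end
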